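(* For every integer $s\ge1$, let $N_s^\star=C(A-LC)^{s-1}L\in\mathbb R^{p\times p}$. Then $\|N_s^\star\|\le\kappa_F^2\psi\gamma_F^{s-1}$ and $\|N_s^\star\|_F\le\sqrt p\,\kappa_F^2\psi\gamma_F^{s-1}$. Moreover, for every integer $h\ge1$, $N^\star=[N_1^\star,\dots,N_h^\star]\in\mathbb R^{p\times ph}$ satisfies $\|N^\star\|_F\le\sqrt p\,\psi\frac{\kappa_F^2}{1-\gamma_F}$.
   Context: Standing setup. Consider the discrete-time LTI system $x_{t+1}=Ax_t+w_t$, $y_t=Cx_t+v_t$ ($t\ge0$) with $x_t\in\mathbb R^n$, $y_t\in\mathbb R^p$, $x_0=0$, $w_t\overset{iid}{\sim}\mathcal N(0,W)$, $v_t\overset{iid}{\sim}\mathcal N(0,V)$, the two noise sequences independent. Assume $(A,W^{1/2})$ is stabilizable and $(A,C)$ is detectable. Let $\Sigma\succeq0$ be the unique positive semidefinite solution of $\Sigma=A\Sigma A^\top-A\Sigma C^\top(C\Sigma C^\top+V)^{-1}C\Sigma A^\top+W$ and $L=A\Sigma C^\top(C\Sigma C^\top+V)^{-1}$. Known constants $\alpha_0,\alpha_1,\psi,\bar\sigma>0$ satisfy $\alpha_0I_n\preceq W\preceq\alpha_1I_n$, $\alpha_0I_p\preceq V\preceq\alpha_1I_p$, $\|C\|\le\psi$, $\|\Sigma\|\le\bar\sigma$. Set $\kappa_F=\sqrt{\bar\sigma/\alpha_0}$ and $\gamma_F=1-\frac{\alpha_0}{2\bar\sigma}$. $\|\cdot\|$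 is the Euclidean/spectral norm and $\|\cdot\|_F$ the Frobenius norm. *)

theory Defs
  imports "HOL-Analysis.Analysis"
begin

fun matpow :: "real^'n^'n \<Rightarrow> nat \<Rightarrow> real^'n^'n" where
  "matpow M 0 = mat 1"
| "matpow M (Suc k) = matpow M k ** M"

text \<open>Spectral (operator 2-)norm of a real matrix. (The library norm on
  real^'n^'m is the Frobenius norm.)\<close>
definition spec_norm :: "real^'n^'m \<Rightarrow> real" where
  "spec_norm M = onorm (\<lambda>x. M *v x)"

definition psd :: "real^'n^'n \<Rightarrow> bool" where
  "psd M \<longleftrightarrow> transpose M = M \<and> (\<forall>x. 0 \<le> x \<bullet> (M *v x))"

definition loewner_le :: "real^'n^'n \<Rightarrow> real^'n^'n \<Rightarrow> bool" where
  "loewner_le M N \<longleftrightarrow> psd (N - M)"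

definition psd_sqrt :: "real^'n^'n \<Rightarrow> real^'n^'n" where
  "psd_sqrt M = (THE S. psd S \<and> S ** S = M)"

definition cmat :: "real^'n^'m \<Rightarrow> complex^'n^'m" where
  "cmat M = (\<chi> i j. complex_of_real (M $ i $ j))"

definition schur_stable :: "real^'n^'n \<Rightarrow> bool" where
  "schur_stable M \<longleftrightarrow>
     (\<forall>(lam::complex) (v::complex^'n). v \<noteq> 0 \<and> cmat M *v v = lam *s v \<longrightarrow> cmod lam < 1)"

definition stabilizable :: "real^'n^'n \<Rightarrow> real^'m^'n \<Rightarrow> bool" where
  "stabilizable A B \<longleftrightarrow> (\<exists>K::real^'n^'m. schur_stable (A + B ** K))"

definition detectable :: "real^'n^'n \<Rightarrow> real^'n^'p \<Rightarrow> bool" where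
  "detectable A C \<longleftrightarrow> (\<exists>K::real^'p^'n. schur_stable (A - K ** C))"

end

theory Submission
  imports Defs
begin

(* With F = A - L C, the Riccati equation is equivalent to the Lyapunov identity
   Sigma = F Sigma F^T + W + L V L^T (the inverse in it exists because V >= alpha0 I).
   Evaluating the quadratic form Q y = y^T Sigma y on both sides gives
     Q (F^T y) + alpha0 |y|^2 + alpha0 |L^T y|^2 <= Q y,
   so, as Q y <= sigma |y|^2, Q contracts by the factor 1 - alpha0/sigma <= gamma_F^2 along F^T,
   while alpha0 |L^T z|^2 <= Q z. Applied to N_s^T y = L^T (F^T)^(s-1) C^T y this gives
   |N_s| <= kappa_F psi sqrt (1 - alpha0/sigma)^(s-1), which is sharper than claimed.
   The Frobenius bounds follow from |M|_F <= sqrt p |M| and from bounding the l2 norm of the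
   sequence (|N_s|_F)_s by its l1 norm, a geometric series. *)

lemma matrix_diff_rdistrib: "((A::real^'n^'m) - B) ** (C::real^'k^'n) = A ** C - B ** C"
  by (simp add: matrix_matrix_mult_def vec_eq_iff algebra_simps sum_subtractf)

lemma matrix_diff_ldistrib: "(C::real^'k^'n) ** ((A::real^'m^'k) - B) = C ** A - C ** B"
  by (simp add: matrix_matrix_mult_def vec_eq_iff algebra_simps sum_subtractf)

lemma matrix_add_rdistrib: "((A::real^'n^'m) + B) ** (C::real^'k^'n) = A ** C + B ** C"
  by (simp add: matrix_matrix_mult_def vec_eq_iff algebra_simps sum.distrib)

lemma transpose_diff: "transpose ((A::real^'n^'m) - B) = transpose A - transpose B"
  by (simp add: transpose_def vec_eq_iff)

lemma sqrt_one_minus_le: "x \<le> 2 \<Longrightarrow> sqrt (1 - x) \<le> 1 - x / 2"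
  by (rule real_le_lsqrt) (auto simp: power2_eq_square algebra_simps)

lemma sqrt_sum_squares_le_geometric:
  fixes a :: "nat \<Rightarrow> real"
  assumes nonneg: "\<And>s. 0 \<le> a s" and bound: "\<And>s. 1 \<le> s \<Longrightarrow> a s \<le> c * \<gamma> ^ (s - 1)"
    and "0 \<le> \<gamma>" "\<gamma> < 1"
  shows "sqrt (\<Sum>s=1..h. a s ^ 2) \<le> c / (1 - \<gamma>)"
proof -
  have "0 \<le> c"
    using nonneg[of 1] bound[of 1] by simp
  have "sqrt (\<Sum>s=1..h. a s ^ 2) \<le> (\<Sum>s=1..h. a s)"
    using L2_set_le_sum[of "{1..h}" a] nonneg by (simp add: L2_set_def)
  also have "\<dots> \<le> (\<Sum>s=1..h. c * \<gamma> ^ (s - 1))"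
    by (intro sum_mono bound) simp
  also have "\<dots> = c * (1 - \<gamma> ^ h) / (1 - \<gamma>)"
    using \<open>\<gamma> < 1\<close> by (simp add: sum.atLeast1_atMost_eq sum_distrib_left[symmetric] sum_gp_strict)
  also have "\<dots> \<le> c / (1 - \<gamma>)"
    using \<open>0 \<le> c\<close> \<open>0 \<le> \<gamma>\<close> \<open>\<gamma> < 1\<close> by (intro divide_right_mono mult_left_le) auto
  finally show ?thesis .
qed

lemma inner_matrix_vector_mult_transpose:
  "(x::real^'m) \<bullet> ((M::real^'n^'m) *v y) = (transpose M *v x) \<bullet> y"
  by (simp add: dot_lmul_matrix)

lemma spec_norm_mult_le: "norm ((M::real^'n^'m) *v x) \<le> spec_norm M * norm x"
  unfolding spec_norm_def by (rule onorm) simp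

lemma spec_norm_nonneg: "0 \<le> spec_norm (M::real^'n^'m)"
  unfolding spec_norm_def by (rule onorm_pos_le) simp

lemma spec_norm_le:
  assumes "\<And>x. norm ((M::real^'n^'m) *v x) \<le> b * norm x"
  shows "spec_norm M \<le> b"
  unfolding spec_norm_def using assms by (rule onorm_le)

lemma spec_norm_le_transpose: "spec_norm (M::real^'n^'m) \<le> spec_norm (transpose M)"
proof (rule spec_norm_le)
  fix x :: "real^'n"
  let ?s = "spec_norm (transpose M)"
  have "norm (M *v x)^2 = (transpose M *v (M *v x)) \<bullet> x"
    by (simp add: power2_norm_eq_inner inner_matrix_vector_mult_transpose)
  also have "\<dots> \<le> norm (transpose M *v (M *v x)) * norm x"
    by (rule norm_cauchy_schwarz)
  also have "\<dots> \<le> ?s * norm (M *v x) * norm x"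
    by (intro mult_right_mono spec_norm_mult_le norm_ge_zero)
  finally have "norm (M *v x) * norm (M *v x) \<le> (?s * norm x) * norm (M *v x)"
    by (simp add: power2_eq_square algebra_simps)
  then show "norm (M *v x) \<le> ?s * norm x"
    using spec_norm_nonneg[of "transpose M"]
    by (cases "M *v x = 0") (auto intro: mult_right_le_imp_le)
qed

lemma spec_norm_transpose: "spec_norm (transpose (M::real^'n^'m)) = spec_norm M"
  using spec_norm_le_transpose[of M] spec_norm_le_transpose[of "transpose M"] by simp

lemma norm_le_sqrt_card_mult_spec_norm:
  "norm (M::real^'n^'m) \<le> sqrt (real CARD('m)) * spec_norm M"
proof -
  have row: "norm (M $ i) \<le> spec_norm M" for i
  proof -
    have "M $ i = transpose M *v axis i 1"
      by (simp add: matrix_vector_mult_basis column_def transpose_def)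
    then show ?thesis
      using spec_norm_mult_le[of "transpose M" "axis i 1"] by (simp add: spec_norm_transpose)
  qed
  have "norm M ^ 2 = (\<Sum>i\<in>UNIV. norm (M $ i) ^ 2)"
    by (simp add: power2_norm_eq_inner inner_vec_def)
  also have "\<dots> \<le> (\<Sum>i\<in>(UNIV::'m set). spec_norm M ^ 2)"
    by (intro sum_mono power_mono row) simp
  also have "\<dots> = (sqrt (real CARD('m)) * spec_norm M) ^ 2"
    by (simp add: power_mult_distrib)
  finally show ?thesis
    using spec_norm_nonneg[of M] by (meson power2_le_imp_le mult_nonneg_nonneg real_sqrt_ge_zero of_nat_0_le_iff)
qed

lemma loewner_le_scaleR_mat_1D:
  assumes "loewner_le (c *\<^sub>R mat 1) (M::real^'n^'n)"
  shows "c * (x \<bullet> x) \<le> x \<bullet> (M *v x)"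
proof -
  have "0 \<le> x \<bullet> ((M - c *\<^sub>R mat 1) *v x)"
    using assms unfolding loewner_le_def psd_def by blast
  moreover have "(c *\<^sub>R mat 1) *v x = c *\<^sub>R x"
    by (metis matrix_vector_mul_lid scaleR_matrix_vector_assoc)
  ultimately show ?thesis
    by (simp add: matrix_vector_mult_diff_rdistrib inner_diff_right)
qed

lemma matrix_inv_mult_left_if_coercive:
  fixes S :: "real^'n^'n"
  assumes "0 < \<alpha>" and coercive: "\<And>x. \<alpha> * (x \<bullet> x) \<le> x \<bullet> (S *v x)"
  shows "matrix_inv S ** S = mat 1"
proof -
  have "x = 0" if "S *v x = 0" for x
    using coercive[of x] \<open>0 < \<alpha>\<close> that
    by (simp add: mult_le_0_iff) (metis inner_eq_zero_iff order_antisym inner_ge_zero)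
  then have "invertible S"
    using matrix_left_invertible_ker invertible_left_inverse by blast
  then show ?thesis
    unfolding invertible_def matrix_inv_def by (rule someI_ex[THEN conjunct2])
qed

lemma coercive_congruence_add:
  fixes \<Sigma> :: "real^'n^'n" and C :: "real^'n^'p" and V :: "real^'p^'p"
  assumes "psd \<Sigma>" and "loewner_le (\<alpha> *\<^sub>R mat 1) V"
  shows "\<alpha> * (x \<bullet> x) \<le> x \<bullet> ((C ** \<Sigma> ** transpose C + V) *v x)"
proof -
  have "x \<bullet> ((C ** \<Sigma> ** transpose C) *v x) = (transpose C *v x) \<bullet> (\<Sigma> *v (transpose C *v x))"
    by (simp add: inner_matrix_vector_mult_transpose matrix_vector_mul_assoc[symmetric])
  also have "\<dots> \<ge> 0"
    using \<open>psd \<Sigma>\<close> unfolding psd_def by blast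
  finally show ?thesis
    using loewner_le_scaleR_mat_1D[OF assms(2), of x]
    by (simp add: matrix_vector_mult_add_rdistrib inner_add_right)
qed

lemma riccati_imp_closed_loop_lyapunov:
  fixes A \<Sigma> W :: "real^'n^'n" and C :: "real^'n^'p" and V K :: "real^'p^'p" and L :: "real^'p^'n"
  assumes K: "K ** (C ** \<Sigma> ** transpose C + V) = mat 1"
    and riccati: "\<Sigma> = A ** \<Sigma> ** transpose A
                 - A ** \<Sigma> ** transpose C ** K ** C ** \<Sigma> ** transpose A + W"
    and L: "L = A ** \<Sigma> ** transpose C ** K"
  shows "\<Sigma> = (A - L ** C) ** \<Sigma> ** transpose (A - L ** C) + W + L ** V ** transpose L"
proof -
  have "L ** (C ** \<Sigma> ** transpose C + V) = A ** \<Sigma> ** transpose C"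
    unfolding L by (metis K matrix_mul_assoc matrix_mul_rid)
  then have "L ** C ** \<Sigma> ** transpose C + L ** V = A ** \<Sigma> ** transpose C"
    by (simp add: matrix_add_ldistrib matrix_mul_assoc)
  then have LVL: "L ** V ** transpose L
      = A ** \<Sigma> ** transpose C ** transpose L - L ** C ** \<Sigma> ** transpose C ** transpose L"
    by (metis add_diff_cancel_left' matrix_add_rdistrib)
  have riccati_L: "\<Sigma> = A ** \<Sigma> ** transpose A - L ** C ** \<Sigma> ** transpose A + W"
    using riccati unfolding L by (simp add: matrix_mul_assoc)
  have closed_loop: "(A - L ** C) ** \<Sigma> ** transpose (A - L ** C)
      = A ** \<Sigma> ** transpose A - A ** \<Sigma> ** transpose C ** transpose L
        - L ** C ** \<Sigma> ** transpose A + L ** C ** \<Sigma> ** transpose C ** transpose L"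
    by (simp add: matrix_diff_rdistrib matrix_diff_ldistrib transpose_diff matrix_transpose_mul
        matrix_mul_assoc algebra_simps)
  show ?thesis
    unfolding LVL closed_loop by (rule trans[OF riccati_L]) (simp add: algebra_simps)
qed

locale lyapunov_contraction =
  fixes F \<Sigma> W :: "real^'n^'n" and L :: "real^'p^'n" and V :: "real^'p^'p" and \<alpha> \<sigma> :: real
  assumes lyapunov: "\<Sigma> = F ** \<Sigma> ** transpose F + W + L ** V ** transpose L"
    and psd_Sigma: "psd \<Sigma>" and spec_norm_Sigma: "spec_norm \<Sigma> \<le> \<sigma>"
    and W_lower: "loewner_le (\<alpha> *\<^sub>R mat 1) W" and V_lower: "loewner_le (\<alpha> *\<^sub>R mat 1) V"
    and alpha_pos: "0 < \<alpha>"
begin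

definition Q :: "real^'n \<Rightarrow> real" where
  "Q y = y \<bullet> (\<Sigma> *v y)"

lemma Q_nonneg: "0 \<le> Q y"
  using psd_Sigma unfolding psd_def Q_def by blast

lemma Q_le: "Q y \<le> \<sigma> * norm y ^ 2"
proof -
  have "Q y \<le> norm y * norm (\<Sigma> *v y)"
    unfolding Q_def by (rule norm_cauchy_schwarz)
  also have "\<dots> \<le> norm y * (\<sigma> * norm y)"
    using spec_norm_mult_le[of \<Sigma> y] spec_norm_Sigma
    by (intro mult_left_mono) (metis mult_right_mono norm_ge_zero order_trans)+
  finally show ?thesis
    by (simp add: power2_eq_square algebra_simps)
qed

lemma Q_decrease: "Q (transpose F *v y) + \<alpha> * norm y ^ 2 + \<alpha> * norm (transpose L *v y) ^ 2 \<le> Q y"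
proof -
  have "Q y = Q (transpose F *v y) + y \<bullet> (W *v y) + (transpose L *v y) \<bullet> (V *v (transpose L *v y))"
    unfolding Q_def
    by (subst (1) lyapunov) (simp add: matrix_vector_mult_add_rdistrib inner_add_right
        inner_matrix_vector_mult_transpose matrix_vector_mul_assoc[symmetric])
  then show ?thesis
    using loewner_le_scaleR_mat_1D[OF W_lower, of y]
      loewner_le_scaleR_mat_1D[OF V_lower, of "transpose L *v y"]
    by (simp add: power2_norm_eq_inner)
qed

lemma alpha_le_sigma: "\<alpha> \<le> \<sigma>"
proof -
  obtain y :: "real^'n" where "norm y = 1"
    using vector_choose_size zero_le_one by blast
  moreover have "0 \<le> \<alpha> * norm (transpose L *v y) ^ 2"
    using alpha_pos by simp
  ultimately show ?thesis
    using Q_decrease[of y] Q_le[of y] Q_nonneg[of "transpose F *v y"] by simp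
qed

lemma Q_contract: "Q (transpose F *v y) \<le> (1 - \<alpha> / \<sigma>) * Q y"
proof -
  have "\<alpha> * (Q y / \<sigma>) \<le> \<alpha> * norm y ^ 2"
    using Q_le[of y] alpha_pos alpha_le_sigma by (intro mult_left_mono) (auto simp: field_simps)
  moreover have "0 \<le> \<alpha> * norm (transpose L *v y) ^ 2"
    using alpha_pos by simp
  ultimately show ?thesis
    using Q_decrease[of y] by (simp add: algebra_simps)
qed

lemma Q_matpow_contract: "Q (transpose (matpow F k) *v y) \<le> (1 - \<alpha> / \<sigma>) ^ k * Q y"
proof (induction k)
  case 0
  then show ?case by simp
next
  case (Suc k)
  have "0 \<le> 1 - \<alpha> / \<sigma>"
    using alpha_pos alpha_le_sigma by simp
  have "Q (transpose (matpow F (Suc k)) *v y) = Q (transpose F *v (transpose (matpow F k) *v y))"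
    by (simp add: matrix_transpose_mul matrix_vector_mul_assoc del: transpose_matrix_vector)
  also have "\<dots> \<le> (1 - \<alpha> / \<sigma>) * Q (transpose (matpow F k) *v y)"
    by (rule Q_contract)
  also have "\<dots> \<le> (1 - \<alpha> / \<sigma>) * ((1 - \<alpha> / \<sigma>) ^ k * Q y)"
    using Suc.IH \<open>0 \<le> 1 - \<alpha> / \<sigma>\<close> by (rule mult_left_mono)
  finally show ?case
    by simp
qed

lemma gain_le_Q: "\<alpha> * norm (transpose L *v y) ^ 2 \<le> Q y"
proof -
  have "0 \<le> \<alpha> * norm y ^ 2"
    using alpha_pos by simp
  then show ?thesis
    using Q_decrease[of y] Q_nonneg[of "transpose F *v y"] by linarith
qed

lemma spec_norm_impulse_response_le:
  fixes C :: "real^'n^'q"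
  shows "spec_norm (C ** matpow F k ** L) \<le> sqrt (\<sigma> / \<alpha>) * spec_norm C * sqrt (1 - \<alpha> / \<sigma>) ^ k"
proof -
  let ?\<rho> = "1 - \<alpha> / \<sigma>" and ?c = "spec_norm C"
  have "norm (transpose (C ** matpow F k ** L) *v y) \<le> sqrt (\<sigma> / \<alpha>) * ?c * sqrt ?\<rho> ^ k * norm y"
    for y
  proof -
    have "\<alpha> * norm (transpose (C ** matpow F k ** L) *v y) ^ 2
        = \<alpha> * norm (transpose L *v (transpose (matpow F k) *v (transpose C *v y))) ^ 2"
      by (simp add: matrix_transpose_mul matrix_vector_mul_assoc del: transpose_matrix_vector)
    also have "\<dots> \<le> ?\<rho> ^ k * Q (transpose C *v y)"
      using gain_le_Q Q_matpow_contract by (rule order_trans)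
    also have "\<dots> \<le> ?\<rho> ^ k * (\<sigma> * (?c * norm y) ^ 2)"
    proof (rule mult_left_mono)
      have "norm (transpose C *v y) \<le> ?c * norm y"
        using spec_norm_mult_le[of "transpose C" y] by (simp add: spec_norm_transpose)
      then have "\<sigma> * norm (transpose C *v y) ^ 2 \<le> \<sigma> * (?c * norm y) ^ 2"
        using alpha_pos alpha_le_sigma by (intro mult_left_mono power_mono) auto
      then show "Q (transpose C *v y) \<le> \<sigma> * (?c * norm y) ^ 2"
        using Q_le order_trans by blast
      show "0 \<le> ?\<rho> ^ k"
        using alpha_pos alpha_le_sigma by simp
    qed
    finally have "norm (transpose (C ** matpow F k ** L) *v y) ^ 2 \<le> \<sigma> / \<alpha> * ?\<rho> ^ k * (?c * norm y) ^ 2"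
      using alpha_pos by (simp add: field_simps)
    then have "norm (transpose (C ** matpow F k ** L) *v y) \<le> sqrt (\<sigma> / \<alpha> * ?\<rho> ^ k * (?c * norm y) ^ 2)"
      by (rule real_le_rsqrt)
    also have "\<dots> = sqrt (\<sigma> / \<alpha>) * sqrt (?\<rho> ^ k) * sqrt ((?c * norm y) ^ 2)"
      by (simp only: real_sqrt_mult)
    also have "\<dots> = sqrt (\<sigma> / \<alpha>) * ?c * sqrt ?\<rho> ^ k * norm y"
      using spec_norm_nonneg[of C] by (simp add: real_sqrt_power)
    finally show ?thesis .
  qed
  then have "spec_norm (transpose (C ** matpow F k ** L)) \<le> sqrt (\<sigma> / \<alpha>) * ?c * sqrt ?\<rho> ^ k"
    by (rule spec_norm_le)
  then show ?thesis
    by (simp only: spec_norm_transpose)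
qed

corollary spec_norm_impulse_response_le_geometric:
  fixes C :: "real^'n^'q"
  shows "spec_norm (C ** matpow F k ** L) \<le> \<sigma> / \<alpha> * spec_norm C * (1 - \<alpha> / (2 * \<sigma>)) ^ k"
proof -
  have "0 < \<sigma>"
    using alpha_pos alpha_le_sigma by simp
  have "sqrt x \<le> x" if "1 \<le> x" for x :: real
    using that by (intro real_le_lsqrt) (auto simp: power2_eq_square mult_le_cancel_left1)
  then have "sqrt (\<sigma> / \<alpha>) \<le> \<sigma> / \<alpha>"
    using alpha_pos alpha_le_sigma by simp
  moreover have "sqrt (1 - \<alpha> / \<sigma>) ^ k \<le> (1 - \<alpha> / (2 * \<sigma>)) ^ k"
    using sqrt_one_minus_le[of "\<alpha> / \<sigma>"] alpha_le_sigma \<open>0 < \<sigma>\<close>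
    by (intro power_mono) (auto simp: pos_divide_le_eq mult.commute)
  ultimately show ?thesis
    using spec_norm_impulse_response_le[of C k] spec_norm_nonneg[of C] alpha_pos alpha_le_sigma
    by (elim order_trans) (intro mult_mono; simp)
qed

end

theorem lemma2:
  fixes A :: "real^'n^'n" and C :: "real^'n^'p"
    and W \<Sigma> :: "real^'n^'n" and V :: "real^'p^'p" and L :: "real^'p^'n"
    and \<alpha>0 \<alpha>1 \<psi> \<sigma>bar :: real
  assumes W_psd: "psd W" and V_psd: "psd V"
    and stab: "stabilizable A (psd_sqrt W)"
    and detect: "detectable A C"
    and Sigma_psd: "psd \<Sigma>"
    and DARE: "\<Sigma> = A ** \<Sigma> ** transpose A
                 - A ** \<Sigma> ** transpose C ** matrix_inv (C ** \<Sigma> ** transpose C + V)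
                     ** C ** \<Sigma> ** transpose A + W"
    and L_def: "L = A ** \<Sigma> ** transpose C ** matrix_inv (C ** \<Sigma> ** transpose C + V)"
    and pos: "\<alpha>0 > 0" "\<alpha>1 > 0" "\<psi> > 0" "\<sigma>bar > 0"
    and W_lo: "loewner_le (\<alpha>0 *\<^sub>R mat 1) W" and W_hi: "loewner_le W (\<alpha>1 *\<^sub>R mat 1)"
    and V_lo: "loewner_le (\<alpha>0 *\<^sub>R mat 1) V" and V_hi: "loewner_le V (\<alpha>1 *\<^sub>R mat 1)"
    and C_bd: "spec_norm C \<le> \<psi>"
    and Sigma_bd: "spec_norm \<Sigma> \<le> \<sigma>bar"
  defines "\<kappa>F \<equiv> sqrt (\<sigma>bar / \<alpha>0)"
    and "\<gamma>F \<equiv> 1 - \<alpha>0 / (2 * \<sigma>bar)"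
    and "Nstar \<equiv> (\<lambda>s::nat. C ** matpow (A - L ** C) (s - 1) ** L)"
  shows "(\<forall>s::nat. s \<ge> 1 \<longrightarrow>
            spec_norm (Nstar s) \<le> \<kappa>F^2 * \<psi> * \<gamma>F^(s - 1)
          \<and> norm (Nstar s) \<le> sqrt (real CARD('p)) * \<kappa>F^2 * \<psi> * \<gamma>F^(s - 1))
       \<and> (\<forall>h::nat. h \<ge> 1 \<longrightarrow>
            sqrt (\<Sum>s=1..h. (norm (Nstar s))^2)
              \<le> sqrt (real CARD('p)) * \<psi> * \<kappa>F^2 / (1 - \<gamma>F))"
proof -
  have "\<Sigma> = (A - L ** C) ** \<Sigma> ** transpose (A - L ** C) + W + L ** V ** transpose L"
    using coercive_congruence_add[OF Sigma_psd V_lo] pos(1)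
    by (intro riccati_imp_closed_loop_lyapunov[OF matrix_inv_mult_left_if_coercive DARE L_def])
  then interpret lyapunov_contraction "A - L ** C" \<Sigma> W L V \<alpha>0 \<sigma>bar
    using Sigma_psd Sigma_bd W_lo V_lo pos(1) by unfold_locales
  have gamma_bounds: "0 \<le> \<gamma>F" "\<gamma>F < 1"
    using alpha_le_sigma pos unfolding \<gamma>F_def by (simp_all add: field_simps)
  have spec: "spec_norm (Nstar s) \<le> \<kappa>F^2 * \<psi> * \<gamma>F^(s - 1)" for s
  proof -
    have "spec_norm (Nstar s) \<le> \<sigma>bar / \<alpha>0 * spec_norm C * \<gamma>F^(s - 1)"
      unfolding Nstar_def \<gamma>F_def by (rule spec_norm_impulse_response_le_geometric)
    also have "\<dots> \<le> \<sigma>bar / \<alpha>0 * \<psi> * \<gamma>F^(s - 1)"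
      using C_bd pos gamma_bounds by (intro mult_right_mono mult_left_mono) simp_all
    also have "\<dots> = \<kappa>F^2 * \<psi> * \<gamma>F^(s - 1)"
      using pos unfolding \<kappa>F_def by simp
    finally show ?thesis .
  qed
  have frob: "norm (Nstar s) \<le> sqrt (real CARD('p)) * \<kappa>F^2 * \<psi> * \<gamma>F^(s - 1)" for s
    using order_trans[OF norm_le_sqrt_card_mult_spec_norm mult_left_mono[OF spec]]
    by (simp only: mult.assoc real_sqrt_ge_zero of_nat_0_le_iff)
  show ?thesis
    using spec frob sqrt_sum_squares_le_geometric[of "\<lambda>s. norm (Nstar s)", OF _ frob gamma_bounds]
    by (simp add: mult_ac)
qed

end
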